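(* Let $(\mathcal{M},g)$ be a smooth four-dimensional Lorentzian manifold, let $\sigma$ be a timelike path parameterized by proper time whose tangent vector is a timelike Killing vector field $\vec K$ defined near $\sigma$, and let $X$ be the Fermi surface of $\sigma$ at $\sigma(0)$, equipped with Fermi–Walker space coordinates $x=(x^1,x^2,x^3)$ and the coordinate measure $d\mathbf{x}=dx^1dx^2dx^3$. Let $\Lambda\subset X$ be a Borel set with compact closure (contained in the region where these coordinates are defined and $\vec K$ is timelike). Regard the speed of light $c$ as a parameter, put $y=1/c$, and define $\alpha=\|\vec K\|/c$, where $\|\vec K\|=\sqrt{-g(\vec K,\vec K)}$. Assume that $\alpha$ extends to a smooth function $\alpha(y,x)$ of $(y,x)$, including $y=0$, with $\alpha(0,x)=1$ and $\partial_y\alpha(0,x)=0$, so that $\alpha=1+\tfrac12\alpha''(0)y^2+O(y^3)$, where $\alpha''(0)=\partial_y^2\alpha(0,x)$. Fix $\beta>0$, particle mass $m>0$ and chemical potential $\mu\in\mathbb{R}$, and put $\gamma(x)=\|\vec K\|\beta mc=\alpha\beta m c^2$, $$z=\frac{4\pi(mc)^3}{(2\pi\hbar)^3}e^{\beta(mc^2+\mu)},\qquad z_{\text{Newt}}=\Big(\frac{m}{2\pi\hbar^2\beta}\Big)^{3/2}e^{\beta\mu},$$ $w_c(x)=z\,K_2(\gamma(x))/\gamma(x)$ (with $K_2$ the modified Bessel function of the second kind) and $w_{\text{Newt}}(x)=z_{\text{Newt}}\,e^{-\frac12\beta m\alpha''(0)(x)}$. Then: (a) (zero cosmological constant) For the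 relativistic ideal gas partition function $Z_\Lambda=\sum_{n\ge0}\frac{1}{n!}\big(\int_\Lambda w_c\,d\mathbf{x}\big)^n$ one has $$\lim_{c\to\infty}Z_\Lambda=Z_{\text{Newt}}(\Lambda):=\sum_{n\ge0}\frac{1}{n!}\Big(\int_\Lambda w_{\text{Newt}}\,d\mathbf{x}\Big)^n=\exp\Big[z_{\text{Newt}}\int_\Lambda e^{-\frac12\beta m\alpha''(0)}d\mathbf{x}\Big].$$ (b) For every $A\in\mathcal{B}_\Lambda$ and every configuration $s\in\Gamma_X$, $$\lim_{c\to\infty}\Pi_\Lambda(A,s)=\Pi^{\text{Newt}}_\Lambda(A,s),$$ where for a weight $w\in\{w_c,w_{\text{Newt}}\}$ the corresponding specification is $$\Pi^{w}_\Lambda(A,s)=\frac{\sum_{n\ge0}\frac{1}{n!}\int_{\Lambda^n}1_A\big(\{x_1,\dots,x_n\}\cup(s\cap(X\setminus\Lambda))\big)\prod_{i=1}^n w(x_i)\,d\mathbf{x}_1\cdots d\mathbf{x}_n}{\sum_{n\ge0}\frac{1}{n!}\big(\int_\Lambda w\,d\mathbf{x}\big)^n},$$ $\Pi_\Lambda=\Pi^{w_c}_\Lambda$ and $\Pi^{\text{Newt}}_\Lambda=\Pi^{w_{\text{Newt}}}_\Lambda$ (both sides being independent of $s$).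
   Context: The Fermi surface $X$ of $\sigma$ at $\sigma(0)$ is the set of points $\exp_{\sigma(0)}(v)$ with $v$ orthogonal to $\sigma'(0)$ (within the domain of the exponential map); Fermi–Walker space coordinates assign to $\exp_{\sigma(0)}(\lambda^j e_j)$ the coordinates $x^j=\lambda^j$, where $e_1,e_2,e_3$ is an orthonormal triad orthogonal to $\sigma'(0)$. The measure $d\mathbf{x}=dx^1dx^2dx^3$ is Lebesgue measure in these coordinates. $\Gamma_X$ is the set of locally finite subsets (configurations) of $X$; for a bounded Borel set $\Lambda'$, $N_{\Lambda'}(x)=|x\cap\Lambda'|$; $\mathcal{B}_\Lambda$ is the $\sigma$-algebra on $\Gamma_X$ generated by the functions $N_{\Lambda'}$ with $\Lambda'\subset\Lambda$ Borel with compact closure (such sets $A$ are called cylinder sets). $\hbar$ is the reduced Planck constant. The ideal gas here means no interaction between particles: each particle only carries the one-body weight $K_2(\gamma)/\gamma$. *)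

theory Defs
  imports "HOL-Analysis.Analysis"
begin

(* C^infinity on an (open) set: differentiable, with every directional derivative again smooth *)
coinductive smooth_on :: "'a::real_normed_vector set \<Rightarrow> ('a \<Rightarrow> real) \<Rightarrow> bool" for S where
  smooth_onI: "(\<forall>x\<in>S. (f has_derivative D x) (at x)) \<Longrightarrow> (\<forall>v. smooth_on S (\<lambda>x. D x v))
     \<Longrightarrow> smooth_on S f"

definition besselK :: "real \<Rightarrow> real \<Rightarrow> real" where
  "besselK \<nu> x = integral {0..} (\<lambda>t. exp (- x * cosh t) * cosh (\<nu> * t))"

(* configurations: locally finite subsets of X (X identified with its Fermi-Walker coordinate domain) *)
definition configs :: "(real^3) set \<Rightarrow> (real^3) set set" where
  "configs X = {s. s \<subseteq> X \<and> (\<forall>K. compact K \<and> K \<subseteq> X \<longrightarrow> finite (s \<inter> K))}"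

definition count_in :: "(real^3) set \<Rightarrow> (real^3) set \<Rightarrow> nat" where
  "count_in L s = card (s \<inter> L)"

(* B_Lambda: sigma-algebra on configs X generated by the functions N_L, L \<subseteq> Lambda Borel
   with compact closure (generated by the preimages of points, the N_L being nat-valued) *)
definition cyl_sigma :: "(real^3) set \<Rightarrow> (real^3) set \<Rightarrow> (real^3) set set set" where
  "cyl_sigma X \<Lambda> = sigma_sets (configs X)
     {{s \<in> configs X. count_in L s = k} | L k. L \<subseteq> \<Lambda> \<and> L \<in> sets borel \<and> compact (closure L)}"

abbreviation leb_on :: "(real^3) set \<Rightarrow> (real^3) measure" where
  "leb_on \<Lambda> \<equiv> restrict_space lborel \<Lambda>"

definition partition_fun :: "(real^3) set \<Rightarrow> (real^3 \<Rightarrow> real) \<Rightarrow> real" where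
  "partition_fun \<Lambda> w = (\<Sum>n. (integral\<^sup>L (leb_on \<Lambda>) w) ^ n / fact n)"

definition spec_num :: "(real^3) set \<Rightarrow> (real^3) set \<Rightarrow> (real^3 \<Rightarrow> real)
    \<Rightarrow> (real^3) set set \<Rightarrow> (real^3) set \<Rightarrow> real" where
  "spec_num X \<Lambda> w A s = (\<Sum>n. integral\<^sup>L (PiM {..<n} (\<lambda>_. leb_on \<Lambda>))
      (\<lambda>xs. indicator A (xs ` {..<n} \<union> (s \<inter> (X - \<Lambda>))) * (\<Prod>i<n. w (xs i))) / fact n)"

definition spec :: "(real^3) set \<Rightarrow> (real^3) set \<Rightarrow> (real^3 \<Rightarrow> real)
    \<Rightarrow> (real^3) set set \<Rightarrow> (real^3) set \<Rightarrow> real" where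
  "spec X \<Lambda> w A s = spec_num X \<Lambda> w A s / partition_fun \<Lambda> w"

(* physical quantities; alpha y x with y = 1/c, hb = reduced Planck constant *)
definition z_rel :: "real \<Rightarrow> real \<Rightarrow> real \<Rightarrow> real \<Rightarrow> real \<Rightarrow> real" where
  "z_rel m \<beta> \<mu> hb c = 4 * pi * (m * c) ^ 3 / (2 * pi * hb) ^ 3 * exp (\<beta> * (m * c\<^sup>2 + \<mu>))"

definition gamma_rel :: "(real \<Rightarrow> real^3 \<Rightarrow> real) \<Rightarrow> real \<Rightarrow> real \<Rightarrow> real \<Rightarrow> real^3 \<Rightarrow> real" where
  "gamma_rel \<alpha> \<beta> m c x = \<alpha> (1 / c) x * \<beta> * m * c\<^sup>2"

definition w_rel :: "(real \<Rightarrow> real^3 \<Rightarrow> real) \<Rightarrow> real \<Rightarrow> real \<Rightarrow> real \<Rightarrow> real \<Rightarrow> real \<Rightarrow> real^3 \<Rightarrow> real" where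
  "w_rel \<alpha> \<beta> m \<mu> hb c x =
     z_rel m \<beta> \<mu> hb c * besselK 2 (gamma_rel \<alpha> \<beta> m c x) / gamma_rel \<alpha> \<beta> m c x"

definition z_newt :: "real \<Rightarrow> real \<Rightarrow> real \<Rightarrow> real \<Rightarrow> real" where
  "z_newt m \<beta> \<mu> hb = (m / (2 * pi * hb\<^sup>2 * \<beta>)) powr (3 / 2) * exp (\<beta> * \<mu>)"

definition alpha2 :: "(real \<Rightarrow> real^3 \<Rightarrow> real) \<Rightarrow> real^3 \<Rightarrow> real" where
  "alpha2 \<alpha> x = deriv (deriv (\<lambda>y. \<alpha> y x)) 0"

definition w_newt :: "(real \<Rightarrow> real^3 \<Rightarrow> real) \<Rightarrow> real \<Rightarrow> real \<Rightarrow> real \<Rightarrow> real \<Rightarrow> real^3 \<Rightarrow> real" where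
  "w_newt \<alpha> \<beta> m \<mu> hb x = z_newt m \<beta> \<mu> hb * exp (- (1 / 2) * \<beta> * m * alpha2 \<alpha> x)"

end

theory Submission
  imports Defs "HOL-Real_Asymp.Real_Asymp" "HOL-Probability.Probability"
begin

text \<open>For an ideal gas the partition function is \<open>exp (\<integral>\<^sub>\<Lambda> w)\<close> and the numerator of the
  specification is a series of integrals of \<open>\<Prod>\<^sub>i w(x\<^sub>i)\<close> over \<open>\<Lambda>\<^sup>n\<close>; both converge as soon as the
  weights converge pointwise and stay uniformly bounded on the bounded set \<open>\<Lambda>\<close> (dominated
  convergence for each term, Tannery's theorem for the series).
  For the relativistic weight, Laplace's method gives \<open>K\<^sub>2(\<gamma>) \<sim> sqrt (pi / (2 \<gamma>)) exp (- \<gamma>)\<close>.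
  With \<open>\<gamma> = \<alpha> \<beta> m c\<^sup>2\<close> and \<open>\<alpha> = 1 + \<alpha>''(0) y\<^sup>2 / 2 + O(y\<^sup>3)\<close> for \<open>y = 1/c\<close>, the factor
  \<open>exp (\<beta> m c\<^sup>2 - \<gamma>)\<close> tends to \<open>exp (- \<beta> m \<alpha>''(0) / 2)\<close>, while the powers of \<open>c\<close> in \<open>z\<close> and
  \<open>\<gamma>\<^sup>3\<^sup>/\<^sup>2\<close> cancel and leave exactly \<open>z\<^sub>N\<^sub>e\<^sub>w\<^sub>t\<close>. The uniform bounds come from a Taylor estimate
  of \<open>\<alpha>\<close> that is uniform on the compact set \<open>closure \<Lambda>\<close>.\<close>

section \<open>Laplace asymptotics of \<open>K\<^sub>2\<close>\<close>

lemma cosh_ge_1_plus_half_square: "1 + x\<^sup>2 / 2 \<le> cosh (x::real)"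
proof -
  let ?f = "\<lambda>n. if even n then x ^ n /\<^sub>R fact n else 0"
  have "summable ?f"
    using cosh_converges sums_summable by blast
  then have "sum ?f {..<3} \<le> suminf ?f"
    by (rule sum_le_suminf) (auto simp: zero_le_even_power)
  moreover have "sum ?f {..<3} = 1 + x\<^sup>2 / 2"
    by (simp add: eval_nat_numeral)
  ultimately show ?thesis
    using cosh_converges sums_unique by metis
qed

lemma borel_measurable_cosh [measurable]: "cosh \<in> borel_measurable (borel :: real measure)"
  by (intro borel_measurable_continuous_onI continuous_intros)

text \<open>The integrand of \<open>besselK 2 g\<close> after the substitution \<open>t = sqrt (2/g) * u\<close> and
  removal of the factor \<open>exp (- g)\<close>; Laplace's method shows it tends to a half Gaussian.\<close>

definition bessel_kernel :: "real \<Rightarrow> real \<Rightarrow> real" where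
  "bessel_kernel g u = indicator {0..} u *
     (exp (- (g * (cosh (sqrt (2/g) * u) - 1))) * cosh (2 * sqrt (2/g) * u))"

lemma bessel_kernel_measurable [measurable]: "bessel_kernel g \<in> borel_measurable borel"
  unfolding bessel_kernel_def by measurable

lemma borel_measurable_integral_bessel_kernel:
  "(\<lambda>g. integral\<^sup>L lborel (bessel_kernel g)) \<in> borel_measurable borel"
proof -
  have "case_prod bessel_kernel \<in> borel_measurable (borel \<Otimes>\<^sub>M lborel)"
    unfolding bessel_kernel_def[abs_def] by measurable
  then show ?thesis
    by (rule lborel.borel_measurable_lebesgue_integral)
qed

lemma tendsto_bessel_kernel:
  "((\<lambda>g. bessel_kernel g u) \<longlongrightarrow> indicator {0..} u * exp (- u\<^sup>2)) at_top"
proof (cases "u > 0")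
  case True
  have "((\<lambda>g::real. g * (cosh (sqrt (2/g) * u) - 1)) \<longlongrightarrow> u * (u * (2 powr (1/2) * 2 powr (1/2))) / 2) at_top"
    using True by real_asymp
  moreover have "u * (u * (2 powr (1/2) * 2 powr (1/2))) / 2 = u\<^sup>2"
    by (simp add: powr_add[symmetric] power2_eq_square)
  ultimately have "((\<lambda>g::real. exp (- (g * (cosh (sqrt (2/g) * u) - 1)))) \<longlongrightarrow> exp (- u\<^sup>2)) at_top"
    by (intro tendsto_exp tendsto_minus) simp
  moreover have "((\<lambda>g::real. cosh (2 * sqrt (2/g) * u)) \<longlongrightarrow> 1) at_top"
    by real_asymp
  ultimately have "((\<lambda>g. exp (- (g * (cosh (sqrt (2/g) * u) - 1))) * cosh (2 * sqrt (2/g) * u))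
      \<longlongrightarrow> exp (- u\<^sup>2) * 1) at_top"
    by (rule tendsto_mult)
  then show ?thesis
    using True by (simp add: bessel_kernel_def)
next
  case False
  then consider "u = 0" | "u < 0" by linarith
  then show ?thesis
    by cases (simp_all add: bessel_kernel_def)
qed

lemma integrable_indicator_exp_decay:
  "integrable lborel (\<lambda>u::real. indicator {0..} u * exp (a - u))"
proof -
  have "(\<lambda>u. exp a * exp (- 1 * u) :: real) integrable_on {0..}"
    by (intro integrable_on_mult_right integrable_on_exp_minus_to_infinity) simp
  then have "set_integrable lebesgue {0..} (\<lambda>u. exp (a - u) :: real)"
    by (intro nonnegative_absolutely_integrable_1) (auto simp: exp_diff exp_minus field_simps)
  then show ?thesis
    unfolding set_integrable_def by (subst (asm) integrable_completion) auto
qed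

lemma bessel_kernel_bound:
  assumes "1 \<le> g"
  shows "\<bar>bessel_kernel g u\<bar> \<le> indicator {0..} u * exp (4 - u)"
proof (cases "u \<ge> 0")
  case True
  define r where "r = sqrt (2/g)"
  have "0 < r" and r_sq: "r\<^sup>2 = 2/g"
    using assms by (auto simp: r_def)
  have "r \<le> sqrt ((3/2)\<^sup>2)"
    unfolding r_def using assms by (intro real_sqrt_le_mono) (auto simp: field_simps)
  then have "r \<le> 3/2" by simp
  have "u\<^sup>2 = g * ((r * u)\<^sup>2 / 2)"
    using assms by (simp add: power_mult_distrib r_sq)
  also have "\<dots> \<le> g * (cosh (r * u) - 1)"
    using cosh_ge_1_plus_half_square[of "r * u"] assms by (intro mult_left_mono) auto
  finally have decay: "u\<^sup>2 \<le> g * (cosh (r * u) - 1)" .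
  have "cosh (2 * r * u) \<le> exp (2 * r * u)"
    using \<open>0 < r\<close> True by (simp add: cosh_def)
  also have "\<dots> \<le> exp (3 * u)"
    using \<open>r \<le> 3/2\<close> True by (simp add: mult_right_mono)
  finally have growth: "cosh (2 * r * u) \<le> exp (3 * u)" .
  have "\<bar>bessel_kernel g u\<bar> = exp (- (g * (cosh (r * u) - 1))) * cosh (2 * r * u)"
    using True by (simp add: bessel_kernel_def r_def)
  also have "\<dots> \<le> exp (- u\<^sup>2) * exp (3 * u)"
    using decay growth by (intro mult_mono) auto
  also have "\<dots> \<le> exp (4 - u)"
    using zero_le_power2[of "u - 2"] by (simp add: exp_add[symmetric] power2_eq_square algebra_simps)
  finally show ?thesis
    using True by simp
qed (simp add: bessel_kernel_def)

lemma integrable_bessel_kernel: "1 \<le> g \<Longrightarrow> integrable lborel (bessel_kernel g)"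
  by (rule Bochner_Integration.integrable_bound[OF integrable_indicator_exp_decay[of 4]])
    (auto intro!: AE_I2 simp: bessel_kernel_bound)

lemma tendsto_integral_bessel_kernel:
  "((\<lambda>g. integral\<^sup>L lborel (bessel_kernel g)) \<longlongrightarrow> sqrt pi / 2) at_top"
proof -
  have "((\<lambda>g. integral\<^sup>L lborel (bessel_kernel g))
          \<longlongrightarrow> integral\<^sup>L lborel (\<lambda>u. indicator {0..} u * exp (- u\<^sup>2))) at_top"
  proof (rule integral_dominated_convergence_at_top[OF _ _ integrable_indicator_exp_decay])
    show "\<forall>\<^sub>F g in at_top. AE u in lborel. norm (bessel_kernel g u) \<le> indicator {0..} u * exp (4 - u)"
      using eventually_ge_at_top[of "1::real"]
      by eventually_elim (auto intro!: AE_I2 simp: bessel_kernel_bound)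
  qed (auto simp: tendsto_bessel_kernel)
  also have "integral\<^sup>L lborel (\<lambda>u. indicator {0..} u * exp (- u\<^sup>2)) = sqrt pi / 2"
    using gaussian_moment_0 has_bochner_integral_integral_eq by fastforce
  finally show ?thesis .
qed

lemma besselK_2_eq_integral_bessel_kernel:
  assumes "1 \<le> g"
  shows "besselK 2 g = exp (- g) * sqrt (2/g) * integral\<^sup>L lborel (bessel_kernel g)"
proof -
  define r where "r = sqrt (2/g)"
  have "0 < r" using assms by (simp add: r_def)
  define f where "f t = indicator {0..} t * (exp (- g * cosh t) * cosh (2 * t))" for t :: real
  have f_rescaled: "f (0 + r * u) = exp (- g) * bessel_kernel g u" for u
  proof -
    have "indicator {0..} (r * u) = (indicator {0..} u :: real)"
      using \<open>0 < r\<close> by (simp add: indicator_def zero_le_mult_iff)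
    moreover have "exp (- g * cosh (r * u)) = exp (- g) * exp (- (g * (cosh (r * u) - 1)))"
      by (simp add: exp_add[symmetric] algebra_simps)
    ultimately show ?thesis
      by (simp add: f_def bessel_kernel_def r_def mult.assoc)
  qed
  have "integrable lborel (\<lambda>u. f (0 + r * u))"
    unfolding f_rescaled using integrable_bessel_kernel[OF assms] by simp
  then have "integrable lborel f"
    using lborel_integrable_real_affine_iff[of r f 0] \<open>0 < r\<close> by simp
  then have "set_integrable lborel {0..} (\<lambda>t. exp (- g * cosh t) * cosh (2 * t))"
    unfolding set_integrable_def f_def by simp
  then have "besselK 2 g = (LINT t:{0..}|lborel. exp (- g * cosh t) * cosh (2 * t))"
    by (simp add: besselK_def set_borel_integral_eq_integral(2))
  also have "\<dots> = integral\<^sup>L lborel f"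
    unfolding set_lebesgue_integral_def f_def by simp
  also have "\<dots> = r * integral\<^sup>L lborel (\<lambda>u. f (0 + r * u))"
    using lborel_integral_real_affine[of r f 0] \<open>0 < r\<close> by simp
  finally show ?thesis
    unfolding f_rescaled by (simp add: r_def)
qed

definition besselK_2_scaled :: "real \<Rightarrow> real" where
  "besselK_2_scaled g = sqrt g * exp g * besselK 2 g"

lemma besselK_2_scaled_eq_integral_bessel_kernel:
  assumes "1 \<le> g"
  shows "besselK_2_scaled g = sqrt 2 * integral\<^sup>L lborel (bessel_kernel g)"
proof -
  have "sqrt g * sqrt (2/g) = sqrt 2"
    using assms by (simp add: real_sqrt_mult[symmetric])
  moreover have "exp g * exp (- g) = 1"
    by (simp add: exp_minus_inverse)
  ultimately show ?thesis
    unfolding besselK_2_scaled_def besselK_2_eq_integral_bessel_kernel[OF assms]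
    by (metis (no_types, lifting) mult.assoc mult.commute mult.left_commute mult_1)
qed

lemma tendsto_besselK_2_scaled: "(besselK_2_scaled \<longlongrightarrow> sqrt (pi / 2)) at_top"
proof -
  have "((\<lambda>g. sqrt 2 * integral\<^sup>L lborel (bessel_kernel g)) \<longlongrightarrow> sqrt 2 * (sqrt pi / 2)) at_top"
    by (intro tendsto_mult tendsto_const tendsto_integral_bessel_kernel)
  moreover have "sqrt 2 * (sqrt pi / 2) = sqrt (pi / 2)"
    by (simp add: real_sqrt_divide divide_simps)
  moreover have "\<forall>\<^sub>F g in at_top. sqrt 2 * integral\<^sup>L lborel (bessel_kernel g) = besselK_2_scaled g"
    using eventually_ge_at_top[of "1::real"]
    by eventually_elim (simp add: besselK_2_scaled_eq_integral_bessel_kernel)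
  ultimately show ?thesis
    by (auto elim: Lim_transform_eventually)
qed

lemma eventually_besselK_2_scaled_bounds: "\<forall>\<^sub>F g in at_top. 0 < besselK_2_scaled g \<and> besselK_2_scaled g < 2"
proof -
  have "sqrt (pi / 2) < sqrt (2\<^sup>2)"
    using pi_less_4 by (subst real_sqrt_less_iff) simp
  then show ?thesis
    using tendsto_besselK_2_scaled
    by (intro eventually_conj order_tendstoD) auto
qed

lemma borel_measurable_besselK_2: "besselK 2 \<in> borel_measurable (restrict_space borel {1..})"
proof -
  have "(\<lambda>g. exp (- g) * sqrt (2/g) * integral\<^sup>L lborel (bessel_kernel g)) \<in> borel_measurable borel"
    using borel_measurable_integral_bessel_kernel by measurable
  then have "(\<lambda>g. exp (- g) * sqrt (2/g) * integral\<^sup>L lborel (bessel_kernel g))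
      \<in> borel_measurable (restrict_space borel {1..})"
    by (rule measurable_restrict_space1)
  then show ?thesis
    by (rule measurable_cong[THEN iffD1, rotated])
      (simp add: space_restrict_space besselK_2_eq_integral_bessel_kernel)
qed

section \<open>Second-order expansion of \<open>\<alpha>\<close> in \<open>y = 1/c\<close>\<close>

lemma smooth_onE:
  assumes "smooth_on S f"
  obtains D where "\<And>x. x \<in> S \<Longrightarrow> (f has_derivative D x) (at x)" "\<And>v. smooth_on S (\<lambda>x. D x v)"
  using assms by (cases rule: smooth_on.cases) blast

lemma smooth_on_imp_continuous_on: "smooth_on S f \<Longrightarrow> continuous_on S f"
  by (erule smooth_onE) (metis continuous_at_imp_continuous_on has_derivative_continuous)

lemma has_derivative_imp_has_real_derivative_fst:
  fixes f :: "real \<times> 'b::real_normed_vector \<Rightarrow> real"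
  assumes "(f has_derivative D) (at (y, x))"
  shows "((\<lambda>t. f (t, x)) has_real_derivative D (1, 0)) (at y)"
proof -
  have "((\<lambda>t. (t, x)) has_derivative (\<lambda>h. (h, 0))) (at y)"
    by (auto intro!: derivative_eq_intros)
  then have "((f \<circ> (\<lambda>t. (t, x))) has_derivative (D \<circ> (\<lambda>h. (h, 0)))) (at y)"
    by (rule diff_chain_at) (simp add: assms)
  moreover have "D \<circ> (\<lambda>h. (h, 0)) = (*) (D (1, 0))"
  proof
    fix h :: real
    have "(h, 0::'b) = h *\<^sub>R (1, 0)" by simp
    then show "(D \<circ> (\<lambda>h. (h, 0))) h = D (1, 0) * h"
      using linear_cmul[OF has_derivative_linear[OF assms], of h "(1, 0)"] by (simp add: mult.commute)
  qed
  ultimately show ?thesis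
    by (simp add: has_field_derivative_def comp_def)
qed

lemma maclaurin_2:
  fixes f f' f'' :: "real \<Rightarrow> real"
  assumes "0 < h"
    and "\<And>t. 0 \<le> t \<Longrightarrow> t \<le> h \<Longrightarrow> (f has_real_derivative f' t) (at t)"
    and "\<And>t. 0 \<le> t \<Longrightarrow> t \<le> h \<Longrightarrow> (f' has_real_derivative f'' t) (at t)"
  obtains t where "0 < t" "t < h" "f h = f 0 + f' 0 * h + f'' t / 2 * h\<^sup>2"
proof -
  define diff where "diff n = (if n = 0 then f else if n = 1 then f' else f'')" for n :: nat
  have "\<exists>t. 0 < t \<and> t < h \<and> f h = (\<Sum>n<2. diff n 0 / fact n * h ^ n) + diff 2 t / fact 2 * h ^ 2"
  proof (rule Maclaurin[OF \<open>0 < h\<close>])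
    show "\<forall>n t. n < 2 \<and> 0 \<le> t \<and> t \<le> h \<longrightarrow> DERIV (diff n) t :> diff (Suc n) t"
      using assms(2,3) by (auto simp: diff_def less_2_cases_iff)
  qed (simp_all add: diff_def)
  then show ?thesis
    using that by (auto simp: diff_def eval_nat_numeral)
qed

locale smooth_expansion =
  fixes \<epsilon> :: real and V :: "(real^3) set" and \<alpha> :: "real \<Rightarrow> real^3 \<Rightarrow> real"
  assumes open_V: "open V" and eps_pos: "0 < \<epsilon>"
    and smooth: "smooth_on ({-\<epsilon><..<\<epsilon>} \<times> V) (\<lambda>p. \<alpha> (fst p) (snd p))"
    and alpha_0: "\<And>x. x \<in> V \<Longrightarrow> \<alpha> 0 x = 1"
    and deriv_alpha_0: "\<And>x. x \<in> V \<Longrightarrow> deriv (\<lambda>y. \<alpha> y x) 0 = 0"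
begin

lemma second_order_taylor:
  "\<exists>g2. continuous_on ({-\<epsilon><..<\<epsilon>} \<times> V) g2
     \<and> (\<forall>x\<in>V. alpha2 \<alpha> x = g2 (0, x))
     \<and> (\<forall>x\<in>V. \<forall>h. 0 < h \<and> h < \<epsilon> \<longrightarrow> (\<exists>t. 0 < t \<and> t < h \<and> \<alpha> h x = 1 + g2 (t, x) / 2 * h\<^sup>2))"
proof -
  let ?S = "{-\<epsilon><..<\<epsilon>} \<times> V"
  obtain D1 where D1: "\<And>p. p \<in> ?S \<Longrightarrow> ((\<lambda>p. \<alpha> (fst p) (snd p)) has_derivative D1 p) (at p)"
    and smooth_D1: "\<And>v. smooth_on ?S (\<lambda>p. D1 p v)"
    using smooth_onE[OF smooth] by blast
  define g1 where "g1 p = D1 p (1, 0)" for p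
  obtain D2 where D2: "\<And>p. p \<in> ?S \<Longrightarrow> (g1 has_derivative D2 p) (at p)"
    and smooth_D2: "\<And>v. smooth_on ?S (\<lambda>p. D2 p v)"
    using smooth_onE[OF smooth_D1[of "(1, 0)"]] unfolding g1_def by blast
  define g2 where "g2 p = D2 p (1, 0)" for p
  have d1: "((\<lambda>t. \<alpha> t x) has_real_derivative g1 (y, x)) (at y)" if "x \<in> V" "\<bar>y\<bar> < \<epsilon>" for x y
    using has_derivative_imp_has_real_derivative_fst[OF D1[of "(y, x)"]] that
    by (auto simp: g1_def abs_less_iff)
  have d2: "((\<lambda>t. g1 (t, x)) has_real_derivative g2 (y, x)) (at y)" if "x \<in> V" "\<bar>y\<bar> < \<epsilon>" for x y
    using has_derivative_imp_has_real_derivative_fst[OF D2[of "(y, x)"]] that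
    by (auto simp: g2_def abs_less_iff)
  have "continuous_on ?S g2"
    unfolding g2_def by (rule smooth_on_imp_continuous_on[OF smooth_D2])
  moreover have "alpha2 \<alpha> x = g2 (0, x)" if x: "x \<in> V" for x
  proof -
    have "(deriv (\<lambda>y. \<alpha> y x) has_real_derivative g2 (0, x)) (at 0)"
    proof (rule has_field_derivative_transform_within_open[OF d2[OF x] open_greaterThanLessThan])
      fix t assume "t \<in> {-\<epsilon><..<\<epsilon>}"
      then show "g1 (t, x) = deriv (\<lambda>y. \<alpha> y x) t"
        using d1[OF x, of t] by (simp add: DERIV_imp_deriv abs_less_iff)
    qed (use eps_pos in auto)
    then show ?thesis
      unfolding alpha2_def by (rule DERIV_imp_deriv)
  qed
  moreover have "\<exists>t. 0 < t \<and> t < h \<and> \<alpha> h x = 1 + g2 (t, x) / 2 * h\<^sup>2"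
    if x: "x \<in> V" and h: "0 < h" "h < \<epsilon>" for x h
  proof -
    obtain t where "0 < t" "t < h" "\<alpha> h x = \<alpha> 0 x + g1 (0, x) * h + g2 (t, x) / 2 * h\<^sup>2"
      using maclaurin_2[where f="\<lambda>t. \<alpha> t x" and f'="\<lambda>t. g1 (t, x)" and f''="\<lambda>t. g2 (t, x)", OF h(1)]
        h d1[OF x] d2[OF x] by auto
    moreover have "g1 (0, x) = 0"
      using deriv_alpha_0[OF x] d1[OF x, of 0] eps_pos by (simp add: DERIV_imp_deriv)
    ultimately show ?thesis
      using alpha_0[OF x] by auto
  qed
  ultimately show ?thesis
    by blast
qed

lemma eventually_reciprocal_small: "\<forall>\<^sub>F c in at_top. 0 < c \<and> 1/c < \<epsilon>/2"
proof -
  have "((\<lambda>c::real. 1/c) \<longlongrightarrow> 0) at_top"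
    by real_asymp
  then have "\<forall>\<^sub>F c in at_top. 1/c < \<epsilon>/2"
    by (rule order_tendstoD(2)) (use eps_pos in simp)
  then show ?thesis
    by (rule eventually_conj[OF eventually_gt_at_top])
qed

lemma continuous_on_alpha_slice:
  assumes "\<bar>y\<bar> < \<epsilon>"
  shows "continuous_on V (\<alpha> y)"
proof -
  have "continuous_on V (\<lambda>x. (\<lambda>p. \<alpha> (fst p) (snd p)) (y, x))"
    using assms
    by (intro continuous_on_compose2[OF smooth_on_imp_continuous_on[OF smooth]
          continuous_on_Pair[OF continuous_on_const continuous_on_id]]) auto
  then show ?thesis by simp
qed

lemma continuous_on_alpha2: "continuous_on V (alpha2 \<alpha>)"
proof -
  obtain g2 where g2: "continuous_on ({-\<epsilon><..<\<epsilon>} \<times> V) g2" and g2_0: "\<forall>x\<in>V. alpha2 \<alpha> x = g2 (0, x)"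
    using second_order_taylor by blast
  have "(\<lambda>x. (0, x)) ` V \<subseteq> {-\<epsilon><..<\<epsilon>} \<times> V"
    using eps_pos by auto
  then have "continuous_on V (\<lambda>x. g2 (0, x))"
    by (rule continuous_on_compose2[OF g2 continuous_on_Pair[OF continuous_on_const continuous_on_id]])
  then show ?thesis
    using g2_0 by (simp cong: continuous_on_cong)
qed

lemma tendsto_alpha_second_order:
  assumes x: "x \<in> V"
  shows "((\<lambda>c. c\<^sup>2 * (1 - \<alpha> (1/c) x)) \<longlongrightarrow> - alpha2 \<alpha> x / 2) at_top"
proof -
  obtain g2 where g2: "continuous_on ({-\<epsilon><..<\<epsilon>} \<times> V) g2"
    and g2_0: "\<forall>x\<in>V. alpha2 \<alpha> x = g2 (0, x)"
    and taylor: "\<forall>x\<in>V. \<forall>h. 0 < h \<and> h < \<epsilon> \<longrightarrow> (\<exists>t. 0 < t \<and> t < h \<and> \<alpha> h x = 1 + g2 (t, x) / 2 * h\<^sup>2)"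
    using second_order_taylor by blast
  obtain c0 where c0: "\<And>c. c0 \<le> c \<Longrightarrow> 0 < c \<and> 1/c < \<epsilon>/2"
    using eventually_reciprocal_small by (auto simp: eventually_at_top_linorder)
  have "\<exists>t. c0 \<le> c \<longrightarrow> 0 < t \<and> t < 1/c \<and> \<alpha> (1/c) x = 1 + g2 (t, x) / 2 * (1/c)\<^sup>2" for c
    using taylor x c0[of c] eps_pos by (cases "c0 \<le> c") auto
  then obtain t where t: "\<And>c. c0 \<le> c \<Longrightarrow> 0 < t c \<and> t c < 1/c \<and> \<alpha> (1/c) x = 1 + g2 (t c, x) / 2 * (1/c)\<^sup>2"
    by metis
  have "(t \<longlongrightarrow> 0) at_top"
  proof (rule Lim_null_comparison)
    show "\<forall>\<^sub>F c in at_top. norm (t c) \<le> 1/c"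
      using eventually_ge_at_top[of c0] by eventually_elim (use t in force)
  qed real_asymp
  moreover have "isCont g2 (0, x)"
    using g2 open_V eps_pos x by (auto simp: continuous_on_eq_continuous_at open_Times)
  ultimately have "((\<lambda>c. g2 (t c, x)) \<longlongrightarrow> g2 (0, x)) at_top"
    by (intro isCont_tendsto_compose[of _ g2] tendsto_Pair tendsto_const)
  then have "((\<lambda>c. - g2 (t c, x) / 2) \<longlongrightarrow> - alpha2 \<alpha> x / 2) at_top"
    using g2_0 x by (auto intro!: tendsto_divide tendsto_minus)
  moreover have "\<forall>\<^sub>F c in at_top. - g2 (t c, x) / 2 = c\<^sup>2 * (1 - \<alpha> (1/c) x)"
    using eventually_ge_at_top[of c0]
  proof eventually_elim
    case (elim c)
    then have "0 < c"
      using c0 by blast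
    then show ?case
      using t[OF elim] by (simp add: field_simps power2_eq_square)
  qed
  ultimately show ?thesis
    by (rule Lim_transform_eventually)
qed

lemma tendsto_alpha_reciprocal:
  assumes "x \<in> V"
  shows "((\<lambda>c. \<alpha> (1/c) x) \<longlongrightarrow> 1) at_top"
proof -
  have "((\<lambda>c. c\<^sup>2 * (1 - \<alpha> (1/c) x) * (1/c)\<^sup>2) \<longlongrightarrow> - alpha2 \<alpha> x / 2 * 0) at_top"
    by (intro tendsto_mult tendsto_alpha_second_order[OF assms]) real_asymp
  moreover have "\<forall>\<^sub>F c in at_top. c\<^sup>2 * (1 - \<alpha> (1/c) x) * (1/c)\<^sup>2 = 1 - \<alpha> (1/c) x"
    using eventually_gt_at_top[of 0] by eventually_elim (simp add: field_simps)
  ultimately have "((\<lambda>c. 1 - \<alpha> (1/c) x) \<longlongrightarrow> 0) at_top"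
    by (simp add: Lim_transform_eventually)
  then have "((\<lambda>c. 1 - (1 - \<alpha> (1/c) x)) \<longlongrightarrow> 1 - 0) at_top"
    by (intro tendsto_diff tendsto_const)
  then show ?thesis
    by simp
qed

lemma uniform_second_order_bound:
  assumes "compact K" "K \<subseteq> V"
  shows "\<exists>M. \<forall>x\<in>K. \<forall>y. 0 < y \<and> y \<le> \<epsilon>/2 \<longrightarrow> \<bar>\<alpha> y x - 1\<bar> \<le> M * y\<^sup>2"
proof -
  obtain g2 where g2: "continuous_on ({-\<epsilon><..<\<epsilon>} \<times> V) g2"
    and taylor: "\<forall>x\<in>V. \<forall>h. 0 < h \<and> h < \<epsilon> \<longrightarrow> (\<exists>t. 0 < t \<and> t < h \<and> \<alpha> h x = 1 + g2 (t, x) / 2 * h\<^sup>2)"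
    using second_order_taylor by blast
  let ?R = "{-\<epsilon>/2..\<epsilon>/2} \<times> K"
  have "?R \<subseteq> {-\<epsilon><..<\<epsilon>} \<times> V"
    using assms(2) eps_pos by auto
  then have "bounded (g2 ` ?R)"
    by (intro compact_imp_bounded compact_continuous_image continuous_on_subset[OF g2]
        compact_Times compact_Icc assms(1))
  then obtain B where "\<forall>v\<in>g2 ` ?R. \<bar>v\<bar> \<le> B"
    unfolding bounded_real by blast
  then have B: "\<bar>g2 p\<bar> \<le> B" if "p \<in> ?R" for p
    using that by blast
  have "\<bar>\<alpha> y x - 1\<bar> \<le> B / 2 * y\<^sup>2" if x: "x \<in> K" and y: "0 < y" "y \<le> \<epsilon>/2" for x y
  proof -
    have "x \<in> V" "y < \<epsilon>"
      using x y assms(2) eps_pos by auto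
    then obtain t where t: "0 < t" "t < y" "\<alpha> y x = 1 + g2 (t, x) / 2 * y\<^sup>2"
      using taylor y(1) by blast
    have "\<bar>g2 (t, x)\<bar> \<le> B"
      using t x y by (intro B) auto
    then show ?thesis
      unfolding t(3) by (simp add: abs_mult mult_right_mono)
  qed
  then show ?thesis
    by blast
qed

lemma eventually_alpha_near_one:
  assumes "compact K" "K \<subseteq> V"
  shows "\<exists>M. \<forall>\<^sub>F c in at_top. \<forall>x\<in>K. 1/2 \<le> \<alpha> (1/c) x \<and> c\<^sup>2 * (1 - \<alpha> (1/c) x) \<le> M"
proof -
  obtain M where M: "\<forall>x\<in>K. \<forall>y. 0 < y \<and> y \<le> \<epsilon>/2 \<longrightarrow> \<bar>\<alpha> y x - 1\<bar> \<le> M * y\<^sup>2"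
    using uniform_second_order_bound[OF assms] by blast
  have "((\<lambda>c::real. M * (1/c)\<^sup>2) \<longlongrightarrow> 0) at_top"
    by real_asymp
  then have "\<forall>\<^sub>F c in at_top. M * (1/c)\<^sup>2 < 1/2"
    by (rule order_tendstoD) simp
  then have "\<forall>\<^sub>F c in at_top. \<forall>x\<in>K. 1/2 \<le> \<alpha> (1/c) x \<and> c\<^sup>2 * (1 - \<alpha> (1/c) x) \<le> M"
    using eventually_reciprocal_small
  proof eventually_elim
    case (elim c)
    then have "0 < c" "1/c \<le> \<epsilon>/2"
      by auto
    show ?case
    proof
      fix x assume "x \<in> K"
      then have near: "\<bar>\<alpha> (1/c) x - 1\<bar> \<le> M * (1/c)\<^sup>2"
        using M \<open>0 < c\<close> \<open>1/c \<le> \<epsilon>/2\<close> by auto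
      have "c\<^sup>2 * (1 - \<alpha> (1/c) x) \<le> c\<^sup>2 * (M * (1/c)\<^sup>2)"
        using near by (intro mult_left_mono) auto
      also have "\<dots> = M"
        using \<open>0 < c\<close> by (simp add: field_simps)
      finally show "1/2 \<le> \<alpha> (1/c) x \<and> c\<^sup>2 * (1 - \<alpha> (1/c) x) \<le> M"
        using near[unfolded abs_le_iff] elim by linarith
    qed
  qed
  then show ?thesis
    by blast
qed

end

section \<open>The relativistic one-particle weight\<close>

lemma powr_three_halves:
  assumes "0 \<le> x"
  shows "x powr (3/2) = x * sqrt (x::real)"
proof -
  have "x powr (3/2) = x powr (1 + 1/2)"
    by simp
  also have "\<dots> = x * x powr (1/2)"
    using assms powr_add[of x 1 "1/2"] by simp
  finally show ?thesis
    using assms by (simp add: powr_half_sqrt)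
qed

lemma z_newt_eq:
  assumes "0 < m" "0 < \<beta>" "0 < hb"
  shows "z_newt m \<beta> \<mu> hb = 4 * pi * m ^ 3 * exp (\<beta> * \<mu>) / (2 * pi * hb) ^ 3 * sqrt (pi / 2) / (\<beta> * m) powr (3/2)"
proof -
  have "sqrt (m / (2 * pi * hb\<^sup>2 * \<beta>)) = sqrt m / (sqrt 2 * sqrt pi * hb * sqrt \<beta>)"
    using assms by (simp add: real_sqrt_divide real_sqrt_mult)
  moreover have "sqrt 2 * sqrt 2 = 2" "sqrt pi * sqrt pi = pi" "sqrt m * sqrt m = m" "sqrt \<beta> * sqrt \<beta> = \<beta>"
    using assms by auto
  moreover have "0 < sqrt \<beta>" "0 < sqrt m" "0 < sqrt pi" "0 < sqrt 2"
    using assms by auto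
  ultimately show ?thesis
    using assms unfolding z_newt_def
    by (simp add: powr_three_halves real_sqrt_mult real_sqrt_divide field_simps power3_eq_cube power2_eq_square)
qed

lemma w_rel_eq:
  fixes \<alpha> :: "real \<Rightarrow> real^3 \<Rightarrow> real"
  assumes "0 < c" "0 < \<alpha> (1/c) x" "0 < \<beta>" "0 < m"
  shows "w_rel \<alpha> \<beta> m \<mu> hb c x = 4 * pi * m ^ 3 * exp (\<beta> * \<mu>) / (2 * pi * hb) ^ 3
      * exp (\<beta> * m * (c\<^sup>2 * (1 - \<alpha> (1/c) x))) / (\<alpha> (1/c) x * \<beta> * m) powr (3/2)
      * besselK_2_scaled (gamma_rel \<alpha> \<beta> m c x)"
proof -
  define k where "k = \<alpha> (1/c) x * \<beta> * m"
  define g where "g = gamma_rel \<alpha> \<beta> m c x"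
  define C where "C = 4 * pi * m ^ 3 * exp (\<beta> * \<mu>) / (2 * pi * hb) ^ 3"
  define E where "E = exp (\<beta> * m * (c\<^sup>2 * (1 - \<alpha> (1/c) x)))"
  define Q where "Q = besselK_2_scaled g"
  have "0 < k" using assms by (simp add: k_def)
  have g: "g = k * c\<^sup>2"
    by (simp add: g_def k_def gamma_rel_def)
  have "exp (\<beta> * (m * c\<^sup>2 + \<mu>)) = exp (\<beta> * \<mu>) * E * exp g"
    by (simp add: g k_def E_def exp_add[symmetric] algebra_simps)
  then have z: "z_rel m \<beta> \<mu> hb c = C * c ^ 3 * E * exp g"
    by (simp add: z_rel_def C_def power_mult_distrib)
  have "sqrt g = sqrt k * c"
    using assms by (simp add: g real_sqrt_mult)
  then have K: "besselK 2 g = Q / (sqrt k * c * exp g)"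
    using \<open>0 < k\<close> assms by (simp add: Q_def besselK_2_scaled_def)
  have "w_rel \<alpha> \<beta> m \<mu> hb c x = C * c ^ 3 * E * exp g * (Q / (sqrt k * c * exp g)) / (k * c\<^sup>2)"
    unfolding w_rel_def g_def[symmetric] z K by (simp only: g)
  also have "\<dots> = C * E / k powr (3/2) * Q"
    using \<open>0 < k\<close> assms by (simp add: powr_three_halves field_simps power3_eq_cube power2_eq_square)
  finally show ?thesis
    unfolding C_def E_def Q_def g_def k_def .
qed

lemma w_rel_bounds:
  fixes \<alpha> :: "real \<Rightarrow> real^3 \<Rightarrow> real"
  assumes "0 < c" "1/2 \<le> \<alpha> (1/c) x" "c\<^sup>2 * (1 - \<alpha> (1/c) x) \<le> M"
    and "0 < \<beta>" "0 < m" "0 < hb"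
    and "0 < besselK_2_scaled (gamma_rel \<alpha> \<beta> m c x)" "besselK_2_scaled (gamma_rel \<alpha> \<beta> m c x) \<le> 2"
  shows "0 < w_rel \<alpha> \<beta> m \<mu> hb c x \<and> w_rel \<alpha> \<beta> m \<mu> hb c x
    \<le> 4 * pi * m ^ 3 * exp (\<beta> * \<mu>) / (2 * pi * hb) ^ 3 * exp (\<beta> * m * M) / (\<beta> * m / 2) powr (3/2) * 2"
proof -
  define C where "C = 4 * pi * m ^ 3 * exp (\<beta> * \<mu>) / (2 * pi * hb) ^ 3"
  define E where "E = exp (\<beta> * m * (c\<^sup>2 * (1 - \<alpha> (1/c) x)))"
  define P where "P = (\<alpha> (1/c) x * \<beta> * m) powr (3/2)"
  define Q where "Q = besselK_2_scaled (gamma_rel \<alpha> \<beta> m c x)"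
  have "0 < C"
    using assms by (simp add: C_def)
  have "0 < E" "E \<le> exp (\<beta> * m * M)"
    using assms by (simp_all add: E_def)
  have "\<beta> * m / 2 \<le> \<alpha> (1/c) x * \<beta> * m"
    using assms by simp
  then have "(\<beta> * m / 2) powr (3/2) \<le> P" "0 < (\<beta> * m / 2) powr (3/2)"
    unfolding P_def using assms by (auto intro: powr_mono2)
  then have "0 < P"
    by linarith
  have "w_rel \<alpha> \<beta> m \<mu> hb c x = C * E / P * Q"
    unfolding C_def E_def P_def Q_def using assms by (intro w_rel_eq) auto
  moreover have "C * E / P * Q \<le> C * exp (\<beta> * m * M) / (\<beta> * m / 2) powr (3/2) * 2"
    using assms \<open>0 < C\<close> \<open>0 < E\<close> \<open>E \<le> exp (\<beta> * m * M)\<close> \<open>(\<beta> * m / 2) powr (3/2) \<le> P\<close>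
      \<open>0 < (\<beta> * m / 2) powr (3/2)\<close>
    by (intro mult_mono frac_le mult_left_mono) (auto simp: Q_def)
  moreover have "0 < C * E / P * Q"
    using \<open>0 < C\<close> \<open>0 < E\<close> \<open>0 < P\<close> assms(7)
    by (intro mult_pos_pos divide_pos_pos) (auto simp: Q_def)
  ultimately show ?thesis
    by (simp add: C_def)
qed

lemma space_leb_on [simp]: "space (leb_on L) = L"
  by (simp add: space_restrict_space)

lemma continuous_on_imp_measurable_leb_on:
  fixes f :: "real^3 \<Rightarrow> real"
  assumes "continuous_on L f"
  shows "f \<in> borel_measurable (leb_on L)"
proof -
  have "f \<in> borel_measurable (restrict_space borel L)"
    by (rule borel_measurable_continuous_on_restrict[OF assms])
  moreover have "sets (restrict_space borel L) = sets (leb_on L)"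
    by (simp add: sets_restrict_space)
  ultimately show ?thesis
    using measurable_cong_sets by blast
qed

lemma w_rel_measurable:
  fixes \<alpha> :: "real \<Rightarrow> real^3 \<Rightarrow> real"
  assumes "continuous_on L (\<alpha> (1/c))" "\<forall>x\<in>L. 1 \<le> gamma_rel \<alpha> \<beta> m c x"
  shows "w_rel \<alpha> \<beta> m \<mu> hb c \<in> borel_measurable (leb_on L)"
proof -
  have "continuous_on L (gamma_rel \<alpha> \<beta> m c)"
    unfolding gamma_rel_def[abs_def] using assms(1) by (intro continuous_intros)
  then have gamma_measurable: "gamma_rel \<alpha> \<beta> m c \<in> borel_measurable (leb_on L)"
    by (rule continuous_on_imp_measurable_leb_on)
  then have "gamma_rel \<alpha> \<beta> m c \<in> leb_on L \<rightarrow>\<^sub>M restrict_space borel {1..}"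
    using assms(2) by (intro measurable_restrict_space2) auto
  then have "(\<lambda>x. besselK 2 (gamma_rel \<alpha> \<beta> m c x)) \<in> borel_measurable (leb_on L)"
    using borel_measurable_besselK_2 by (rule measurable_compose)
  then show ?thesis
    unfolding w_rel_def[abs_def] using gamma_measurable by measurable
qed

lemma w_newt_pos: "0 < m \<Longrightarrow> 0 < \<beta> \<Longrightarrow> 0 < hb \<Longrightarrow> 0 < w_newt \<alpha> \<beta> m \<mu> hb x"
  by (simp add: w_newt_def z_newt_def)

context smooth_expansion
begin

lemma continuous_on_w_newt: "continuous_on V (w_newt \<alpha> \<beta> m \<mu> hb)"
  unfolding w_newt_def[abs_def] using continuous_on_alpha2 by (intro continuous_intros)

lemma eventually_gamma_rel_ge:
  assumes "compact K" "K \<subseteq> V" "0 < \<beta>" "0 < m"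
  shows "\<forall>\<^sub>F c in at_top. \<forall>x\<in>K. \<Gamma> \<le> gamma_rel \<alpha> \<beta> m c x"
proof -
  obtain M where M: "\<forall>\<^sub>F c in at_top. \<forall>x\<in>K. 1/2 \<le> \<alpha> (1/c) x \<and> c\<^sup>2 * (1 - \<alpha> (1/c) x) \<le> M"
    using eventually_alpha_near_one[OF assms(1,2)] by blast
  have "filterlim (\<lambda>c::real. \<beta> * m / 2 * c\<^sup>2) at_top at_top"
    using assms(3,4) by real_asymp
  then have "\<forall>\<^sub>F c in at_top. \<Gamma> \<le> \<beta> * m / 2 * c\<^sup>2"
    by (simp add: filterlim_at_top)
  with M show ?thesis
  proof eventually_elim
    case (elim c)
    show ?case
    proof
      fix x assume "x \<in> K"
      then have "1/2 * (\<beta> * m * c\<^sup>2) \<le> \<alpha> (1/c) x * (\<beta> * m * c\<^sup>2)"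
        using elim assms(3,4) by (intro mult_right_mono) auto
      then show "\<Gamma> \<le> gamma_rel \<alpha> \<beta> m c x"
        using elim by (simp add: gamma_rel_def mult.assoc)
    qed
  qed
qed

lemma w_rel_uniformly_bounded:
  assumes "compact K" "K \<subseteq> V" "0 < \<beta>" "0 < m" "0 < hb"
  shows "\<exists>B. \<forall>\<^sub>F c in at_top. \<forall>x\<in>K. 0 < w_rel \<alpha> \<beta> m \<mu> hb c x \<and> w_rel \<alpha> \<beta> m \<mu> hb c x \<le> B"
proof -
  obtain M where M: "\<forall>\<^sub>F c in at_top. \<forall>x\<in>K. 1/2 \<le> \<alpha> (1/c) x \<and> c\<^sup>2 * (1 - \<alpha> (1/c) x) \<le> M"
    using eventually_alpha_near_one[OF assms(1,2)] by blast
  obtain \<Gamma> where \<Gamma>: "\<And>g. \<Gamma> \<le> g \<Longrightarrow> 0 < besselK_2_scaled g \<and> besselK_2_scaled g < 2"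
    using eventually_besselK_2_scaled_bounds by (auto simp: eventually_at_top_linorder)
  have "\<forall>\<^sub>F c in at_top. \<forall>x\<in>K. 0 < w_rel \<alpha> \<beta> m \<mu> hb c x \<and> w_rel \<alpha> \<beta> m \<mu> hb c x
      \<le> 4 * pi * m ^ 3 * exp (\<beta> * \<mu>) / (2 * pi * hb) ^ 3 * exp (\<beta> * m * M) / (\<beta> * m / 2) powr (3/2) * 2"
    using M eventually_gamma_rel_ge[OF assms(1-4), of \<Gamma>] eventually_reciprocal_small
  proof eventually_elim
    case (elim c)
    then show ?case
      using assms(3-5) \<Gamma> by (intro ballI w_rel_bounds) (auto simp: less_imp_le)
  qed
  then show ?thesis
    by blast
qed

lemma eventually_w_rel_admissible:
  assumes "compact K" "K \<subseteq> V" "L \<subseteq> K" "0 < \<beta>" "0 < m" "0 < hb"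
  shows "\<exists>B. \<forall>\<^sub>F c in at_top. w_rel \<alpha> \<beta> m \<mu> hb c \<in> borel_measurable (leb_on L)
    \<and> (\<forall>x\<in>L. 0 < w_rel \<alpha> \<beta> m \<mu> hb c x \<and> w_rel \<alpha> \<beta> m \<mu> hb c x \<le> B)"
proof -
  obtain B where B: "\<forall>\<^sub>F c in at_top. \<forall>x\<in>K. 0 < w_rel \<alpha> \<beta> m \<mu> hb c x \<and> w_rel \<alpha> \<beta> m \<mu> hb c x \<le> B"
    using w_rel_uniformly_bounded[OF assms(1,2,4-6)] by blast
  have "\<forall>\<^sub>F c in at_top. w_rel \<alpha> \<beta> m \<mu> hb c \<in> borel_measurable (leb_on L)
      \<and> (\<forall>x\<in>L. 0 < w_rel \<alpha> \<beta> m \<mu> hb c x \<and> w_rel \<alpha> \<beta> m \<mu> hb c x \<le> B)"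
    using B eventually_gamma_rel_ge[OF assms(1,2,4,5), of 1] eventually_reciprocal_small
  proof eventually_elim
    case (elim c)
    then have "0 < 1/c" "1/c < \<epsilon>/2"
      by auto
    then have "\<bar>1/c\<bar> < \<epsilon>"
      by arith
    then have "continuous_on L (\<alpha> (1/c))"
      using continuous_on_subset[OF continuous_on_alpha_slice] assms(2,3) by blast
    then show ?case
      using elim assms(3) by (auto intro!: w_rel_measurable)
  qed
  then show ?thesis
    by blast
qed

lemma tendsto_w_rel:
  assumes x: "x \<in> V" and "0 < \<beta>" "0 < m" "0 < hb"
  shows "((\<lambda>c. w_rel \<alpha> \<beta> m \<mu> hb c x) \<longlongrightarrow> w_newt \<alpha> \<beta> m \<mu> hb x) at_top"
proof -
  define C where "C = 4 * pi * m ^ 3 * exp (\<beta> * \<mu>) / (2 * pi * hb) ^ 3"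
  have second: "((\<lambda>c. c\<^sup>2 * (1 - \<alpha> (1/c) x)) \<longlongrightarrow> - alpha2 \<alpha> x / 2) at_top"
    by (rule tendsto_alpha_second_order[OF x])
  have alpha_tendsto: "((\<lambda>c. \<alpha> (1/c) x) \<longlongrightarrow> 1) at_top"
    by (rule tendsto_alpha_reciprocal[OF x])
  have k_tendsto: "((\<lambda>c. \<alpha> (1/c) x * \<beta> * m) \<longlongrightarrow> 1 * \<beta> * m) at_top"
    by (intro tendsto_mult alpha_tendsto tendsto_const)
  have square_at_top: "filterlim (\<lambda>c::real. c\<^sup>2) at_top at_top"
    by real_asymp
  have "filterlim (\<lambda>c. \<alpha> (1/c) x * \<beta> * m * c\<^sup>2) at_top at_top"
    by (rule filterlim_tendsto_pos_mult_at_top[OF k_tendsto _ square_at_top]) (use assms in simp)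
  then have "((\<lambda>c. besselK_2_scaled (gamma_rel \<alpha> \<beta> m c x)) \<longlongrightarrow> sqrt (pi / 2)) at_top"
    unfolding gamma_rel_def by (rule filterlim_compose[OF tendsto_besselK_2_scaled])
  then have "((\<lambda>c. C * exp (\<beta> * m * (c\<^sup>2 * (1 - \<alpha> (1/c) x))) / (\<alpha> (1/c) x * \<beta> * m) powr (3/2)
      * besselK_2_scaled (gamma_rel \<alpha> \<beta> m c x))
      \<longlongrightarrow> C * exp (\<beta> * m * (- alpha2 \<alpha> x / 2)) / (1 * \<beta> * m) powr (3/2) * sqrt (pi / 2)) at_top"
    using assms by (intro tendsto_intros second alpha_tendsto) auto
  moreover have "C * exp (\<beta> * m * (- alpha2 \<alpha> x / 2)) / (1 * \<beta> * m) powr (3/2) * sqrt (pi / 2)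
      = w_newt \<alpha> \<beta> m \<mu> hb x"
    using assms by (simp add: w_newt_def z_newt_eq C_def field_simps)
  moreover have "\<forall>\<^sub>F c in at_top. C * exp (\<beta> * m * (c\<^sup>2 * (1 - \<alpha> (1/c) x))) / (\<alpha> (1/c) x * \<beta> * m) powr (3/2)
      * besselK_2_scaled (gamma_rel \<alpha> \<beta> m c x) = w_rel \<alpha> \<beta> m \<mu> hb c x"
    using eventually_gt_at_top[of 0] order_tendstoD(1)[OF alpha_tendsto zero_less_one]
    by eventually_elim (use assms in \<open>simp add: w_rel_eq C_def\<close>)
  ultimately show ?thesis
    by (auto elim: Lim_transform_eventually)
qed

end

section \<open>Ideal gases with convergent weights\<close>

lemma partition_fun_eq_exp: "partition_fun L w = exp (integral\<^sup>L (leb_on L) w)"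
  using exp_converges[of "integral\<^sup>L (leb_on L) w"]
  by (simp add: partition_fun_def sums_iff divide_inverse mult.commute)

locale bounded_weights =
  fixes L :: "(real^3) set" and W :: "real \<Rightarrow> real^3 \<Rightarrow> real" and W0 :: "real^3 \<Rightarrow> real" and B :: real
  assumes L_borel: "L \<in> sets borel" and L_finite: "emeasure lborel L < \<infinity>"
    and W_measurable: "\<And>c. W c \<in> borel_measurable (leb_on L)"
    and W0_measurable: "W0 \<in> borel_measurable (leb_on L)"
    and W_pos: "\<And>c x. x \<in> L \<Longrightarrow> 0 < W c x"
    and W_le: "\<And>c x. x \<in> L \<Longrightarrow> W c x \<le> B"
    and W0_pos: "\<And>x. x \<in> L \<Longrightarrow> 0 < W0 x"
    and W_tendsto: "\<And>x. x \<in> L \<Longrightarrow> ((\<lambda>c. W c x) \<longlongrightarrow> W0 x) at_top"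
begin

lemma finite_measure_leb_on: "finite_measure (leb_on L)"
  using L_borel L_finite by (intro finite_measureI) (simp add: emeasure_restrict_space)

definition config_measure :: "nat \<Rightarrow> (nat \<Rightarrow> real^3) measure" where
  "config_measure n = PiM {..<n} (\<lambda>_. leb_on L)"

definition spec_term :: "(real^3) set \<Rightarrow> (real^3) set set \<Rightarrow> (real^3) set \<Rightarrow> (real^3 \<Rightarrow> real) \<Rightarrow> nat \<Rightarrow> real" where
  "spec_term X A s w n = integral\<^sup>L (config_measure n)
     (\<lambda>xs. indicator A (xs ` {..<n} \<union> (s \<inter> (X - L))) * (\<Prod>i<n. w (xs i)))"

lemma spec_num_eq_suminf_spec_term: "spec_num X L w A s = (\<Sum>n. spec_term X A s w n / fact n)"
  unfolding spec_num_def spec_term_def config_measure_def ..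

lemma space_config_measure: "space (config_measure n) = Pi\<^sub>E {..<n} (\<lambda>_. L)"
  by (simp add: config_measure_def space_PiM)

lemma emeasure_config_measure_space:
  "emeasure (config_measure n) (space (config_measure n)) = ennreal (measure (leb_on L) L ^ n)"
proof -
  interpret finite_measure "leb_on L" by (rule finite_measure_leb_on)
  interpret product_sigma_finite "\<lambda>_::nat. leb_on L"
    by (simp add: product_sigma_finite_def sigma_finite_measure)
  have "emeasure (config_measure n) (Pi\<^sub>E {..<n} (\<lambda>_. L)) = (\<Prod>i<n. emeasure (leb_on L) L)"
    unfolding config_measure_def by (rule emeasure_PiM) (auto simp: L_borel sets_restrict_space_iff)
  then show ?thesis
    by (simp add: space_config_measure emeasure_eq_measure ennreal_power)
qed

lemma finite_measure_config_measure: "finite_measure (config_measure n)"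
  by (intro finite_measureI) (simp add: emeasure_config_measure_space)

lemma measure_config_measure_space:
  "measure (config_measure n) (space (config_measure n)) = measure (leb_on L) L ^ n"
  by (simp add: measure_def emeasure_config_measure_space)

lemma borel_measurable_prod_weights:
  fixes w :: "real^3 \<Rightarrow> real"
  assumes "w \<in> borel_measurable (leb_on L)"
  shows "(\<lambda>xs. \<Prod>i<n. w (xs i)) \<in> borel_measurable (config_measure n)"
proof -
  have "(\<lambda>xs. w (xs i)) \<in> borel_measurable (config_measure n)" if "i \<in> {..<n}" for i
  proof -
    have "(\<lambda>xs. xs i) \<in> config_measure n \<rightarrow>\<^sub>M leb_on L"
      unfolding config_measure_def using that by (rule measurable_component_singleton)
    then show ?thesis
      using assms by (rule measurable_compose)
  qed
  then show ?thesis
    by (rule borel_measurable_prod[where f = "\<lambda>i xs. w (xs i)", simplified])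
qed

lemma prod_weights_pos:
  fixes w :: "real^3 \<Rightarrow> real"
  assumes "\<And>x. x \<in> L \<Longrightarrow> 0 < w x" and "xs \<in> space (config_measure n)"
  shows "0 < (\<Prod>i<n. w (xs i))"
  by (intro prod_pos assms(1)) (use assms(2) in \<open>auto simp: space_config_measure\<close>)

lemma spec_term_eq_0_if_not_measurable:
  fixes w :: "real^3 \<Rightarrow> real"
  assumes not_measurable: "(\<lambda>xs. indicator A (xs ` {..<n} \<union> (s \<inter> (X - L))) :: real) \<notin> borel_measurable (config_measure n)"
    and w_measurable: "w \<in> borel_measurable (leb_on L)" and w_pos: "\<And>x. x \<in> L \<Longrightarrow> 0 < w x"
  shows "spec_term X A s w n = 0"
proof -
  let ?F = "\<lambda>xs. indicator A (xs ` {..<n} \<union> (s \<inter> (X - L))) :: real"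
  have "\<not> integrable (config_measure n) (\<lambda>xs. ?F xs * (\<Prod>i<n. w (xs i)))"
  proof
    assume "integrable (config_measure n) (\<lambda>xs. ?F xs * (\<Prod>i<n. w (xs i)))"
    then have "(\<lambda>xs. ?F xs * (\<Prod>i<n. w (xs i)) / (\<Prod>i<n. w (xs i))) \<in> borel_measurable (config_measure n)"
      using borel_measurable_prod_weights[OF w_measurable] by (intro borel_measurable_divide) auto
    moreover have "?F xs * (\<Prod>i<n. w (xs i)) / (\<Prod>i<n. w (xs i)) = ?F xs"
      if "xs \<in> space (config_measure n)" for xs
      using prod_weights_pos[of w, OF w_pos that] by (metis nonzero_mult_div_cancel_right order_less_irrefl)
    ultimately show False
      using not_measurable measurable_cong by (metis (no_types, lifting))
  qed
  then show ?thesis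
    unfolding spec_term_def by (rule not_integrable_integral_eq)
qed

lemma abs_prod_weights_le:
  assumes "xs \<in> space (config_measure n)"
  shows "\<bar>\<Prod>i<n. W c (xs i)\<bar> \<le> B ^ n"
proof -
  have "\<bar>\<Prod>i<n. W c (xs i)\<bar> = (\<Prod>i<n. W c (xs i))"
    using prod_weights_pos[of "W c", OF W_pos assms] by simp
  also have "\<dots> \<le> (\<Prod>i<n. B)"
  proof (rule prod_mono)
    fix i assume "i \<in> {..<n}"
    then have "xs i \<in> L"
      using assms by (auto simp: space_config_measure)
    then show "0 \<le> W c (xs i) \<and> W c (xs i) \<le> B"
      using W_pos W_le less_imp_le by blast
  qed
  finally show ?thesis by simp
qed

lemma abs_weighted_indicator_le:
  assumes "xs \<in> space (config_measure n)"
  shows "\<bar>indicator S y * (\<Prod>i<n. W c (xs i))\<bar> \<le> B ^ n"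
proof -
  have "\<bar>indicator S y * (\<Prod>i<n. W c (xs i))\<bar> \<le> \<bar>\<Prod>i<n. W c (xs i)\<bar>"
    by (simp add: abs_mult indicator_def)
  also have "\<dots> \<le> B ^ n"
    by (rule abs_prod_weights_le[OF assms])
  finally show ?thesis .
qed

lemma tendsto_spec_term: "((\<lambda>c. spec_term X A s (W c) n) \<longlongrightarrow> spec_term X A s W0 n) at_top"
proof (cases "(\<lambda>xs. indicator A (xs ` {..<n} \<union> (s \<inter> (X - L))) :: real) \<in> borel_measurable (config_measure n)")
  case A_measurable: True
  interpret finite_measure "config_measure n" by (rule finite_measure_config_measure)
  show ?thesis
    unfolding spec_term_def
  proof (rule integral_dominated_convergence_at_top[where w="\<lambda>_. B ^ n"])
    show "AE xs in config_measure n. ((\<lambda>c. indicator A (xs ` {..<n} \<union> (s \<inter> (X - L))) * (\<Prod>i<n. W c (xs i)))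
        \<longlongrightarrow> indicator A (xs ` {..<n} \<union> (s \<inter> (X - L))) * (\<Prod>i<n. W0 (xs i))) at_top"
      by (intro AE_I2 tendsto_mult tendsto_const tendsto_prod W_tendsto) (auto simp: space_config_measure)
    show "\<forall>\<^sub>F c in at_top. AE xs in config_measure n.
        norm (indicator A (xs ` {..<n} \<union> (s \<inter> (X - L))) * (\<Prod>i<n. W c (xs i))) \<le> B ^ n"
      using abs_weighted_indicator_le by (intro always_eventually allI AE_I2) simp
  qed (auto intro!: borel_measurable_times A_measurable borel_measurable_prod_weights W_measurable W0_measurable)
next
  case False
  then show ?thesis
    using spec_term_eq_0_if_not_measurable W_measurable W_pos W0_measurable W0_pos by simp
qed

lemma abs_spec_term_le: "\<bar>spec_term X A s (W c) n\<bar> \<le> (B * measure (leb_on L) L) ^ n"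
proof -
  interpret finite_measure "config_measure n" by (rule finite_measure_config_measure)
  let ?g = "\<lambda>xs. indicator A (xs ` {..<n} \<union> (s \<inter> (X - L))) * (\<Prod>i<n. W c (xs i)) :: real"
  have g_nonneg: "0 \<le> ?g xs" if "xs \<in> space (config_measure n)" for xs
    using prod_weights_pos[of "W c", OF W_pos that] by simp
  have g_le: "?g xs \<le> B ^ n" if "xs \<in> space (config_measure n)" for xs
    using abs_weighted_indicator_le[OF that] by (rule order_trans[OF abs_ge_self])
  then have "spec_term X A s (W c) n \<le> integral\<^sup>L (config_measure n) (\<lambda>_. B ^ n)"
    unfolding spec_term_def by (intro integral_mono') (auto intro: order_trans[OF g_nonneg g_le])
  also have "\<dots> = (B * measure (leb_on L) L) ^ n"
    by (simp add: measure_config_measure_space power_mult_distrib)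
  finally show ?thesis
    using Bochner_Integration.integral_nonneg[of "config_measure n" ?g] g_nonneg
    unfolding spec_term_def by simp
qed

lemma tendsto_spec_num: "((\<lambda>c. spec_num X L (W c) A s) \<longlongrightarrow> spec_num X L W0 A s) at_top"
proof -
  let ?b = "\<lambda>k. (B * measure (leb_on L) L) ^ k / fact k"
  have "((\<lambda>c. \<Sum>k. spec_term X A s (W c) k / fact k) \<longlongrightarrow> (\<Sum>k. spec_term X A s W0 k / fact k)) at_top"
  proof (rule tannerys_theorem[where M = ?b, THEN conjunct2, THEN conjunct2])
    show "((\<lambda>c. spec_term X A s (W c) k / fact k) \<longlongrightarrow> spec_term X A s W0 k / fact k) at_top" for k
      by (intro tendsto_divide tendsto_spec_term tendsto_const) auto
    show "\<forall>\<^sub>F (k, c) in at_top \<times>\<^sub>F at_top. norm (spec_term X A s (W c) k / fact k) \<le> ?b k"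
      by (intro always_eventually) (auto simp: abs_spec_term_le divide_right_mono)
    show "summable ?b"
      using summable_exp[of "B * measure (leb_on L) L"] by (simp add: divide_inverse mult.commute)
  qed auto
  then show ?thesis
    unfolding spec_num_eq_suminf_spec_term .
qed

lemma tendsto_integral_weights: "((\<lambda>c. integral\<^sup>L (leb_on L) (W c)) \<longlongrightarrow> integral\<^sup>L (leb_on L) W0) at_top"
proof (rule integral_dominated_convergence_at_top[where w = "\<lambda>_. B"])
  show "integrable (leb_on L) (\<lambda>_. B)"
    using finite_measure.integrable_const[OF finite_measure_leb_on] by blast
  show "\<forall>\<^sub>F c in at_top. AE x in leb_on L. norm (W c x) \<le> B"
    using W_pos W_le by (intro always_eventually allI AE_I2) (simp add: less_imp_le)
  show "AE x in leb_on L. ((\<lambda>c. W c x) \<longlongrightarrow> W0 x) at_top"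
    by (intro AE_I2 W_tendsto) simp
qed (auto intro: W_measurable W0_measurable)

lemma tendsto_partition_fun: "((\<lambda>c. partition_fun L (W c)) \<longlongrightarrow> partition_fun L W0) at_top"
  unfolding partition_fun_eq_exp by (intro tendsto_exp tendsto_integral_weights)

lemma tendsto_spec: "((\<lambda>c. spec X L (W c) A s) \<longlongrightarrow> spec X L W0 A s) at_top"
  unfolding spec_def by (intro tendsto_divide tendsto_spec_num tendsto_partition_fun) (simp add: partition_fun_eq_exp)

end

lemma ideal_gas_limit:
  fixes W :: "real \<Rightarrow> real^3 \<Rightarrow> real"
  assumes "L \<in> sets borel" "emeasure lborel L < \<infinity>"
    and W_eventually: "\<forall>\<^sub>F c in at_top. W c \<in> borel_measurable (leb_on L) \<and> (\<forall>x\<in>L. 0 < W c x \<and> W c x \<le> B)"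
    and "W0 \<in> borel_measurable (leb_on L)" "\<And>x. x \<in> L \<Longrightarrow> 0 < W0 x"
    and W_tendsto: "\<And>x. x \<in> L \<Longrightarrow> ((\<lambda>c. W c x) \<longlongrightarrow> W0 x) at_top"
  shows "((\<lambda>c. partition_fun L (W c)) \<longlongrightarrow> partition_fun L W0) at_top"
    and "((\<lambda>c. spec X L (W c) A s) \<longlongrightarrow> spec X L W0 A s) at_top"
proof -
  obtain c0 where c0: "\<And>c. c0 \<le> c \<Longrightarrow> W c \<in> borel_measurable (leb_on L) \<and> (\<forall>x\<in>L. 0 < W c x \<and> W c x \<le> B)"
    using W_eventually by (auto simp: eventually_at_top_linorder)
  have eventually_W: "\<forall>\<^sub>F c in at_top. W (max c c0) = W c"
    using eventually_ge_at_top[of c0] by eventually_elim simp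
  then have eventually_W_at: "\<forall>\<^sub>F c in at_top. W c x = W (max c c0) x" for x
    by eventually_elim simp
  interpret bounded_weights L "\<lambda>c. W (max c c0)" W0 B
  proof
    show "((\<lambda>c. W (max c c0) x) \<longlongrightarrow> W0 x) at_top" if "x \<in> L" for x
      using W_tendsto[OF that] eventually_W_at by (rule Lim_transform_eventually)
  qed (use assms c0 in auto)
  show "((\<lambda>c. partition_fun L (W c)) \<longlongrightarrow> partition_fun L W0) at_top"
    using tendsto_partition_fun by (rule Lim_transform_eventually) (use eventually_W in \<open>eventually_elim, simp\<close>)
  show "((\<lambda>c. spec X L (W c) A s) \<longlongrightarrow> spec X L W0 A s) at_top"
    using tendsto_spec by (rule Lim_transform_eventually) (use eventually_W in \<open>eventually_elim, simp\<close>)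
qed

theorem theorem1:
  fixes X \<Lambda> V :: "(real^3) set"
    and \<alpha> :: "real \<Rightarrow> real^3 \<Rightarrow> real"
    and \<beta> m \<mu> hb \<epsilon> :: real
  assumes X_open: "open X"
    and \<Lambda>_borel: "\<Lambda> \<in> sets borel"
    and \<Lambda>_cpt: "compact (closure \<Lambda>)"
    and V: "open V" "closure \<Lambda> \<subseteq> V" "V \<subseteq> X"
    and eps: "\<epsilon> > 0"
    and smooth: "smooth_on ({-\<epsilon><..<\<epsilon>} \<times> V) (\<lambda>p. \<alpha> (fst p) (snd p))"
    and alpha0: "\<And>x. x \<in> V \<Longrightarrow> \<alpha> 0 x = 1"
    and dalpha0: "\<And>x. x \<in> V \<Longrightarrow> deriv (\<lambda>y. \<alpha> y x) 0 = 0"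
    and timelike: "\<And>y x. y > 0 \<Longrightarrow> x \<in> closure \<Lambda> \<Longrightarrow> \<alpha> y x > 0"
    and hb: "hb > 0" and \<beta>: "\<beta> > 0" and m: "m > 0"
  shows "((\<lambda>c. partition_fun \<Lambda> (w_rel \<alpha> \<beta> m \<mu> hb c))
            \<longlongrightarrow> partition_fun \<Lambda> (w_newt \<alpha> \<beta> m \<mu> hb)) at_top
       \<and> partition_fun \<Lambda> (w_newt \<alpha> \<beta> m \<mu> hb)
            = exp (z_newt m \<beta> \<mu> hb * integral\<^sup>L (leb_on \<Lambda>) (\<lambda>x. exp (- (1 / 2) * \<beta> * m * alpha2 \<alpha> x)))
       \<and> (\<forall>A \<in> cyl_sigma X \<Lambda>. \<forall>s \<in> configs X.
            ((\<lambda>c. spec X \<Lambda> (w_rel \<alpha> \<beta> m \<mu> hb c) A s)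
               \<longlongrightarrow> spec X \<Lambda> (w_newt \<alpha> \<beta> m \<mu> hb) A s) at_top)"
proof -
  interpret smooth_expansion \<epsilon> V \<alpha>
    using V(1) eps smooth alpha0 dalpha0 by unfold_locales
  have \<Lambda>_V: "\<Lambda> \<subseteq> V"
    using V(2) closure_subset by blast
  obtain B where weights: "\<forall>\<^sub>F c in at_top. w_rel \<alpha> \<beta> m \<mu> hb c \<in> borel_measurable (leb_on \<Lambda>)
      \<and> (\<forall>x\<in>\<Lambda>. 0 < w_rel \<alpha> \<beta> m \<mu> hb c x \<and> w_rel \<alpha> \<beta> m \<mu> hb c x \<le> B)"
    using eventually_w_rel_admissible[OF \<Lambda>_cpt V(2) closure_subset \<beta> m hb] by blast
  have newt_measurable: "w_newt \<alpha> \<beta> m \<mu> hb \<in> borel_measurable (leb_on \<Lambda>)"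
    using \<Lambda>_V by (intro continuous_on_imp_measurable_leb_on continuous_on_subset[OF continuous_on_w_newt])
  have newt_pos: "0 < w_newt \<alpha> \<beta> m \<mu> hb x" for x
    by (rule w_newt_pos[OF m \<beta> hb])
  have finite: "emeasure lborel \<Lambda> < \<infinity>"
    using \<Lambda>_cpt closure_subset by (intro emeasure_bounded_finite bounded_subset[OF compact_imp_bounded])
  have pointwise: "((\<lambda>c. w_rel \<alpha> \<beta> m \<mu> hb c x) \<longlongrightarrow> w_newt \<alpha> \<beta> m \<mu> hb x) at_top" if "x \<in> \<Lambda>" for x
    using that \<Lambda>_V by (intro tendsto_w_rel \<beta> m hb) auto
  note limits = ideal_gas_limit[OF \<Lambda>_borel finite weights newt_measurable newt_pos pointwise]
  have "partition_fun \<Lambda> (w_newt \<alpha> \<beta> m \<mu> hb)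
      = exp (z_newt m \<beta> \<mu> hb * integral\<^sup>L (leb_on \<Lambda>) (\<lambda>x. exp (- (1 / 2) * \<beta> * m * alpha2 \<alpha> x)))"
    by (simp add: partition_fun_eq_exp w_newt_def[abs_def])
  then show ?thesis
    using limits by blast
qed

end
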